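(* Let $s\in\mathbb{N}$, $p,q\in[1,\infty]$, and $\alpha>0$. Then there exists a constant $c>0$, depending only on $\alpha,s,b$ and $q$, such that every cubature rule $Q(f)=\sum_{i=1}^N w_i f(\mathbf{x}_i)$ (with arbitrary points $\mathbf{x}_i\in[0,1)^s$ and arbitrary real weights $w_i$) that uses $N\ge3$ sample points satisfies $$e^{\mathrm{wor}}(Q,\widetilde{\mathcal{H}}_{\mathrm{wav},\alpha,s,p,q})\ge c\,N^{-\alpha}\ln(N)^{\frac{s-1}{q'}},$$ where $1/q+1/q'=1$ and $\widetilde{\mathcal{H}}_{\mathrm{wav},\alpha,s,p,q}$ denotes the subspace $\bigcup_{L\in\mathbb{N}_0}V^{s,L}$ of $\mathcal{H}_{\mathrm{wav},\alpha,s,p,q}$ endowed with the norm $\|\cdot\|_{\mathrm{wav},\alpha,s,p,q}$.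
   Context: Conventions: $1/\infty=0$, $r^{1/\infty}=1$. Fix an integer base $b\ge2$. Put $\Delta_{-1}=\{0\}$, $\Delta_j=\{0,\dots,b^j-1\}$ ($j\in\mathbb{N}_0$), $\nabla_0=\{0\}$, $\nabla_j=\{0,\dots,b-1\}$ ($j\ge1$). Univariate Haar functions: $\psi^0_{0,0}=1_{[0,1)}$ and for $j\ge1$, $i\in\nabla_j$, $k\in\Delta_{j-1}$: $\psi^j_{i,k}(x)=b^{j/2-1}\big(b\,1_{[b^{-j}(bk+i),b^{-j}(bk+i+1))}(x)-1_{[b^{1-j}k,b^{1-j}(k+1))}(x)\big)$. For $\mathbf{j}\in\mathbb{N}_0^s$: $|\mathbf{j}|=\sum_\ell j_\ell$, $\nabla_{\mathbf{j}}=\prod_\ell\nabla_{j_\ell}$, $\Delta_{\mathbf{j}-\mathbf{1}}=\prod_\ell\Delta_{j_\ell-1}$, $\Psi^{\mathbf{j}}_{\mathbf{i},\mathbf{k}}(\mathbf{x})=\prod_{\ell=1}^s\psi^{j_\ell}_{i_\ell,k_\ell}(x_\ell)$, $\langle f,g\rangle=\int_{[0,1]^s}fg$. For $q<\infty$: $\|f\|^q_{\mathrm{wav},\alpha,s,p,q}=\sum_{L=0}^\infty b^{q(\alpha-1/p+1/2)L}\sum_{|\mathbf{j}|=L}\big(\sum_{\mathbf{k}\in\Delta_{\mathbf{j}-\mathbf{1}}}\sum_{\mathbf{i}\in\nabla_{\mathbf{j}}}|\langle f,\Psi^{\mathbf{j}}_{\mathbf{i},\mathbf{k}}\rangle|^p\big)^{q/p}$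 (maximum instead of $\ell_p$-sum if $p=\infty$); for $q=\infty$: $\|f\|_{\mathrm{wav},\alpha,s,p,\infty}=\sup_{\mathbf{j}}b^{(\alpha-1/p+1/2)|\mathbf{j}|}(\sum_{\mathbf{k}}\sum_{\mathbf{i}}|\langle f,\Psi^{\mathbf{j}}_{\mathbf{i},\mathbf{k}}\rangle|^p)^{1/p}$. $\mathcal{H}_{\mathrm{wav},\alpha,s,p,q}$ is the space of $f\in L_1([0,1]^s)$ with finite norm (for $q=\infty$ additionally requiring that the wavelet series of $f$ converges pointwise to a function equal to $f$ a.e.). Approximation spaces: for $j\in\mathbb{N}_0$ let $V^j$ be the space of functions on $[0,1)$ constant on each interval $[kb^{-j},(k+1)b^{-j})$, $k\in\Delta_j$; for $L\in\mathbb{N}_0$, $V^{s,L}$ is the linear span of all functions $\mathbf{x}\mapsto\prod_{\ell=1}^s g_\ell(x_\ell)$ with $g_\ell\in V^{j_\ell}$ and $|\mathbf{j}|=L$. Elements of $V^{s,L}$ are finite linear combinations of indicator functions of half-open boxes, so point evaluation is well defined on them. For a normed function space $X$ and a cubature rule $Q$, $e^{\mathrm{wor}}(Q,X)=\sup\{|\int_{[0,1]^s}f-Q(f)|: f\in X,\|f\|_X\le1\}$. *)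

theory Defs
  imports "HOL-Analysis.Analysis"
begin

(* Exponents p, q in [1,\<infinity>] are extended reals. Convention 1/\<infinity> = 0. *)
definition einv :: "ereal \<Rightarrow> real" where
  "einv p = (if p = \<infinity> then 0 else 1 / real_of_ereal p)"

definition nabla :: "nat \<Rightarrow> nat \<Rightarrow> nat set" where
  "nabla b j = (if j = 0 then {0} else {0..<b})"

definition delta_m1 :: "nat \<Rightarrow> nat \<Rightarrow> nat set" where
  "delta_m1 b j = (if j = 0 then {0} else {0..<b ^ (j - 1)})"

definition haar :: "nat \<Rightarrow> nat \<Rightarrow> nat \<Rightarrow> nat \<Rightarrow> real \<Rightarrow> real" where
  "haar b j i k x =
    (if j = 0 then indicator {0..<1} x
     else real b powr (real j / 2 - 1) *
       (real b * indicator {real b powr (- real j) * (real b * real k + real i) ..<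
                            real b powr (- real j) * (real b * real k + real i + 1)} x
        - indicator {real b powr (1 - real j) * real k ..< real b powr (1 - real j) * (real k + 1)} x))"

(* Multivariate Haar functions; points of [0,1]^s are functions nat \<Rightarrow> real
  of which only the coordinates 0..<s matter. *)
definition Haar :: "nat \<Rightarrow> nat \<Rightarrow> (nat \<Rightarrow> nat) \<Rightarrow> (nat \<Rightarrow> nat) \<Rightarrow> (nat \<Rightarrow> nat)
                      \<Rightarrow> (nat \<Rightarrow> real) \<Rightarrow> real" where
  "Haar b s jv iv kv x = (\<Prod>l<s. haar b (jv l) (iv l) (kv l) (x l))"

definition cube :: "nat \<Rightarrow> (nat \<Rightarrow> real) measure" where
  "cube s = PiM {..<s} (\<lambda>_. restrict_space lborel {0..1})"

definition wcoef :: "nat \<Rightarrow> nat \<Rightarrow> ((nat \<Rightarrow> real) \<Rightarrow> real) \<Rightarrow> (nat \<Rightarrow> nat) \<Rightarrow> (nat \<Rightarrow> nat)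
                      \<Rightarrow> (nat \<Rightarrow> nat) \<Rightarrow> real" where
  "wcoef b s f jv iv kv = integral\<^sup>L (cube s) (\<lambda>x. f x * Haar b s jv iv kv x)"

definition levels :: "nat \<Rightarrow> nat \<Rightarrow> (nat \<Rightarrow> nat) set" where
  "levels s L = {jv \<in> PiE {..<s} (\<lambda>_. {..L}). (\<Sum>l<s. jv l) = L}"

definition all_levels :: "nat \<Rightarrow> (nat \<Rightarrow> nat) set" where
  "all_levels s = (\<Union>L. levels s L)"

definition kiset :: "nat \<Rightarrow> nat \<Rightarrow> (nat \<Rightarrow> nat) \<Rightarrow> ((nat \<Rightarrow> nat) \<times> (nat \<Rightarrow> nat)) set" where
  "kiset b s jv = PiE {..<s} (\<lambda>l. delta_m1 b (jv l)) \<times> PiE {..<s} (\<lambda>l. nabla b (jv l))"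

definition inner_p :: "nat \<Rightarrow> nat \<Rightarrow> ereal \<Rightarrow> ((nat \<Rightarrow> real) \<Rightarrow> real) \<Rightarrow> (nat \<Rightarrow> nat) \<Rightarrow> real" where
  "inner_p b s p f jv =
    (if p = \<infinity> then Max ((\<lambda>(kv, iv). \<bar>wcoef b s f jv iv kv\<bar>) ` kiset b s jv)
     else (\<Sum>(kv, iv)\<in>kiset b s jv. \<bar>wcoef b s f jv iv kv\<bar> powr real_of_ereal p)
            powr (1 / real_of_ereal p))"

definition wterm :: "nat \<Rightarrow> real \<Rightarrow> nat \<Rightarrow> ereal \<Rightarrow> ((nat \<Rightarrow> real) \<Rightarrow> real) \<Rightarrow> (nat \<Rightarrow> nat) \<Rightarrow> real" where
  "wterm b \<alpha> s p f jv =
     real b powr ((\<alpha> - einv p + 1/2) * real (\<Sum>l<s. jv l)) * inner_p b s p f jv"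

definition wav_norm :: "nat \<Rightarrow> real \<Rightarrow> nat \<Rightarrow> ereal \<Rightarrow> ereal \<Rightarrow> ((nat \<Rightarrow> real) \<Rightarrow> real) \<Rightarrow> ereal" where
  "wav_norm b \<alpha> s p q f =
    (if q = \<infinity> then (SUP jv\<in>all_levels s. ereal (wterm b \<alpha> s p f jv))
     else (let S = (\<Sum>L. ennreal (\<Sum>jv\<in>levels s L. wterm b \<alpha> s p f jv powr real_of_ereal q))
           in if S = top then \<infinity> else ereal (enn2real S powr (1 / real_of_ereal q))))"

(* V^j: functions on [0,1) constant on the b-adic intervals of length b^{-j}
  (extended by 0 outside [0,1)). *)
definition Vj :: "nat \<Rightarrow> nat \<Rightarrow> (real \<Rightarrow> real) set" where
  "Vj b j = {g. \<exists>c :: nat \<Rightarrow> real. \<forall>x. g x =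
     (if 0 \<le> x \<and> x < 1 then c (nat \<lfloor>real b ^ j * x\<rfloor>) else 0)}"

definition VsL :: "nat \<Rightarrow> nat \<Rightarrow> nat \<Rightarrow> ((nat \<Rightarrow> real) \<Rightarrow> real) set" where
  "VsL b s L = {f. \<exists>(n::nat) (a :: nat \<Rightarrow> real) (jv :: nat \<Rightarrow> nat \<Rightarrow> nat)
                      (g :: nat \<Rightarrow> nat \<Rightarrow> real \<Rightarrow> real).
      (\<forall>t<n. (\<Sum>l<s. jv t l) = L \<and> (\<forall>l<s. g t l \<in> Vj b (jv t l))) \<and>
      f = (\<lambda>x. \<Sum>t<n. a t * (\<Prod>l<s. g t l (x l)))}"

definition Htilde :: "nat \<Rightarrow> nat \<Rightarrow> ((nat \<Rightarrow> real) \<Rightarrow> real) set" where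
  "Htilde b s = (\<Union>L. VsL b s L)"

definition e_wor :: "nat \<Rightarrow> real \<Rightarrow> nat \<Rightarrow> ereal \<Rightarrow> ereal \<Rightarrow> nat \<Rightarrow> (nat \<Rightarrow> real)
                      \<Rightarrow> (nat \<Rightarrow> nat \<Rightarrow> real) \<Rightarrow> ereal" where
  "e_wor b \<alpha> s p q N w x =
     (SUP f\<in>{f \<in> Htilde b s. wav_norm b \<alpha> s p q f \<le> 1}.
        ereal \<bar>integral\<^sup>L (cube s) f - (\<Sum>i<N. w i * f (x i))\<bar>)"

end

theory Submission
  imports Defs "HOL-Real_Asymp.Real_Asymp"
begin

text \<open>Given \<open>N\<close> nodes, pick \<open>L\<close> with \<open>2N \<le> b\<^sup>L \<le> 2bN\<close>. For each multi-index
  \<open>j\<close> with \<open>|j| = L\<close>, at most \<open>N\<close> of the \<open>b\<^sup>L\<close> boxes of shape \<open>j\<close> (products of \<open>b\<close>-adic intervals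
  of lengths \<open>b\<^bsup>-j\<^sub>l\<^esup>\<close>) contain a node. The sum \<open>f\<close> of the indicators of all empty boxes of all
  shapes of level \<open>L\<close> lies in \<open>V\<^bsup>s,L\<^esup>\<close>, vanishes at the nodes, and has integral at least half the
  number \<open>\<asymp> L\<^bsup>s-1\<^esup>\<close> of shapes. A Haar function of shape \<open>m\<close> is orthogonal to all boxes whose
  shape does not dominate \<open>m\<close>, and at most \<open>(L - |m| + 1)\<^bsup>s-1\<^esup>\<close> shapes do; this bounds the
  level-\<open>|m|\<close> term of the norm of \<open>f\<close> by \<open>b\<^bsup>\<alpha>L\<^esup>\<close> times a polynomial in \<open>L - |m|\<close> times
  \<open>b\<^bsup>-\<alpha>(L-|m|)\<^esup>\<close>, so \<open>\<parallel>f\<parallel> = O(b\<^bsup>\<alpha>L\<^esup> L\<^bsup>(s-1)/q\<^esup>)\<close>. The normalised \<open>f\<close> shows that the error is at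
  least a constant times \<open>L\<^bsup>(s-1)(1-1/q)\<^esup> b\<^bsup>-\<alpha>L\<^esup> \<asymp> N\<^bsup>-\<alpha>\<^esup> (ln N)\<^bsup>(s-1)/q'\<^esup>\<close>.\<close>

section \<open>Indicators of \<open>b\<close>-adic intervals and Haar functions\<close>

definition badic_ind :: "nat \<Rightarrow> nat \<Rightarrow> nat \<Rightarrow> real \<Rightarrow> real" where
  "badic_ind b j k x = (if \<lfloor>real b ^ j * x\<rfloor> = int k then 1 else 0)"

lemma badic_ind_eq_indicator:
  assumes "b \<ge> 1"
  shows "badic_ind b j k x = indicator {real k / real b ^ j ..< (real k + 1) / real b ^ j} x"
proof -
  have bj: "real b ^ j > 0" using assms by simp
  have "\<lfloor>real b ^ j * x\<rfloor> = int k \<longleftrightarrow> real k \<le> real b ^ j * x \<and> real b ^ j * x < real k + 1"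
    by (simp add: floor_eq_iff)
  also have "\<dots> \<longleftrightarrow> x \<in> {real k / real b ^ j ..< (real k + 1) / real b ^ j}"
    using bj by (auto simp: field_simps)
  finally show ?thesis by (simp add: badic_ind_def indicator_def)
qed

lemma badic_ind_nonneg: "0 \<le> badic_ind b j k x"
  by (simp add: badic_ind_def)

lemma badic_ind_measurable [measurable]:
  assumes "b \<ge> 1"
  shows "badic_ind b j k \<in> borel_measurable borel"
proof -
  have "badic_ind b j k = indicator {real k / real b ^ j ..< (real k + 1) / real b ^ j}"
    using badic_ind_eq_indicator[OF assms] by (simp add: fun_eq_iff)
  then show ?thesis by simp
qed

text \<open>A coarse interval either contains a finer one or is disjoint from it.\<close>
lemma badic_ind_mult_finer:
  assumes "b \<ge> 1" "j \<le> m"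
  shows "badic_ind b j k x * badic_ind b m n x =
           (if n div b ^ (m - j) = k then badic_ind b m n x else 0)"
proof -
  have "real b ^ m = real b ^ j * real b ^ (m - j)"
    using assms by (simp add: power_add[symmetric])
  then have "\<lfloor>real b ^ j * x\<rfloor> = \<lfloor>(real b ^ m * x) / real_of_int (int (b ^ (m - j)))\<rfloor>"
    using assms by simp
  also have "\<dots> = \<lfloor>real b ^ m * x\<rfloor> div int (b ^ (m - j))"
    by (rule floor_divide_real_eq_div) simp
  finally have "\<lfloor>real b ^ m * x\<rfloor> = int n \<Longrightarrow> \<lfloor>real b ^ j * x\<rfloor> = int (n div b ^ (m - j))"
    by (simp add: zdiv_int)
  then show ?thesis by (auto simp: badic_ind_def)
qed

lemma sum_badic_ind_le_1: "(\<Sum>k<n. badic_ind b j k x) \<le> 1"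
proof -
  have "(\<Sum>k<n. badic_ind b j k x) = real (card ({..<n} \<inter> {k. \<lfloor>real b ^ j * x\<rfloor> = int k}))"
    by (simp add: sum.If_cases badic_ind_def)
  also have "card ({..<n} \<inter> {k. \<lfloor>real b ^ j * x\<rfloor> = int k}) \<le> card {nat \<lfloor>real b ^ j * x\<rfloor>}"
    by (rule card_mono) auto
  finally show ?thesis by simp
qed

lemma haar_0: "b \<ge> 1 \<Longrightarrow> haar b 0 i k x = badic_ind b 0 0 x"
  by (simp add: haar_def badic_ind_eq_indicator)

lemma haar_eq_badic_ind:
  assumes b: "b \<ge> 2" and m: "m \<ge> 1"
  shows "haar b m i k x = real b powr (real m / 2 - 1) *
           (real b * badic_ind b m (b * k + i) x - badic_ind b (m - 1) k x)"
proof -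
  have bpos: "real b > 0" using b by simp
  have e1: "real b powr (- real m) = 1 / real b ^ m"
    using bpos by (simp add: powr_minus powr_realpow divide_simps)
  have "real b powr (1 - real m) = real b powr (- real (m - 1))"
    using m by (simp add: of_nat_diff)
  also have "\<dots> = 1 / real b ^ (m - 1)"
    using bpos by (simp add: powr_minus powr_realpow divide_simps)
  finally have e2: "real b powr (1 - real m) = 1 / real b ^ (m - 1)" .
  show ?thesis
    using b m unfolding haar_def badic_ind_eq_indicator[OF order_trans[OF one_le_numeral b]] e1 e2
    by (simp add: field_simps)
qed

lemma haar_measurable [measurable]: "haar b m i k \<in> borel_measurable borel"
  unfolding haar_def[abs_def] by measurable

lemma abs_haar_le: "\<bar>haar b m i k x\<bar> \<le> (if m = 0 then 1 else real b powr (real m / 2 - 1) * (real b + 1))"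
proof -
  have "\<bar>real b * indicator A x - indicator B x\<bar> \<le> real b + 1" for A B :: "real set"
    by (auto simp: indicator_def)
  then have bound: "\<bar>real b powr (real m / 2 - 1) * (real b * indicator A x - indicator B x)\<bar>
      \<le> real b powr (real m / 2 - 1) * (real b + 1)" for A B :: "real set"
    by (simp add: abs_mult mult_left_mono)
  show ?thesis
  proof (cases "m = 0")
    case False
    show ?thesis unfolding haar_def if_not_P[OF False] by (rule bound)
  qed (simp add: haar_def indicator_def)
qed

lemma haar_child_index_less:
  fixes b k i :: nat
  assumes "m \<ge> 1" "k < b ^ (m - 1)" "i < b"
  shows "b * k + i < b ^ m"
proof -
  have "b * k + i < b * k + b" using \<open>i < b\<close> by linarith
  also have "\<dots> = b * (k + 1)" by simp
  also have "\<dots> \<le> b * b ^ (m - 1)" using assms by (intro mult_left_mono) auto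
  also have "\<dots> = b ^ m" using assms by (simp add: power_Suc[symmetric])
  finally show ?thesis .
qed

definition unit_lborel :: "real measure" where
  "unit_lborel = restrict_space lborel {0..1}"

lemma finite_measure_unit_lborel: "finite_measure unit_lborel"
  unfolding unit_lborel_def
  by (rule finite_measureI) (simp add: emeasure_restrict_space space_restrict_space)

lemma integrable_unit_lborel_bounded:
  fixes f :: "real \<Rightarrow> real"
  assumes "f \<in> borel_measurable borel" "\<And>x. \<bar>f x\<bar> \<le> B"
  shows "integrable unit_lborel f"
proof -
  interpret finite_measure unit_lborel by (rule finite_measure_unit_lborel)
  have "f \<in> borel_measurable unit_lborel"
    unfolding unit_lborel_def by (rule measurable_restrict_space1) (use assms(1) in simp)
  then show ?thesis
    using assms(2) by (intro integrable_const_bound[where B=B]) auto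
qed

lemma integrable_badic_ind: "b \<ge> 1 \<Longrightarrow> integrable unit_lborel (badic_ind b j k)"
  by (rule integrable_unit_lborel_bounded[where B=1]) (auto simp: badic_ind_def)

lemma integrable_haar: "integrable unit_lborel (haar b m i k)"
  by (rule integrable_unit_lborel_bounded[OF haar_measurable abs_haar_le])

lemma integrable_badic_ind_times_haar:
  assumes "b \<ge> 1"
  shows "integrable unit_lborel (\<lambda>x. badic_ind b j k x * haar b m i k' x)"
proof (rule integrable_unit_lborel_bounded)
  show "(\<lambda>x. badic_ind b j k x * haar b m i k' x) \<in> borel_measurable borel"
    using assms by measurable
  show "\<bar>badic_ind b j k x * haar b m i k' x\<bar> \<le> (if m = 0 then 1 else real b powr (real m / 2 - 1) * (real b + 1))" for x
    using abs_haar_le[of b m i k' x] by (auto simp: badic_ind_def)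
qed

lemma integral_badic_ind:
  assumes "b \<ge> 1" "k < b ^ j"
  shows "integral\<^sup>L unit_lborel (badic_ind b j k) = 1 / real b ^ j"
proof -
  define I where "I = {real k / real b ^ j ..< (real k + 1) / real b ^ j}"
  have bj: "real b ^ j > 0" using assms by simp
  have "real k + 1 \<le> real b ^ j"
    using assms by (metis Suc_leI of_nat_Suc of_nat_le_iff of_nat_power add.commute)
  then have bounds: "0 \<le> real k / real b ^ j" "(real k + 1) / real b ^ j \<le> 1"
    using bj by simp_all
  have "I \<subseteq> {0..1}"
  proof
    fix x assume "x \<in> I"
    then have "real k / real b ^ j \<le> x" "x < (real k + 1) / real b ^ j"
      by (auto simp: I_def)
    then show "x \<in> {0..1}"
      using bounds by (simp only: atLeastAtMost_iff) linarith
  qed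
  then have "(\<lambda>x. indicator {0..1} x *\<^sub>R badic_ind b j k x) = indicator I"
    using assms(1) by (auto simp: badic_ind_eq_indicator I_def indicator_def fun_eq_iff)
  then have "integral\<^sup>L unit_lborel (badic_ind b j k) = measure lborel I"
    unfolding unit_lborel_def by (subst integral_restrict_space) simp_all
  also have "\<dots> = (real k + 1) / real b ^ j - real k / real b ^ j"
    using bj unfolding I_def by (intro measure_lborel_Ico) (simp add: divide_right_mono)
  also have "\<dots> = 1 / real b ^ j"
    by (simp add: diff_divide_distrib[symmetric])
  finally show ?thesis .
qed

lemma integral_badic_ind_times_haar_coarser:
  assumes b: "b \<ge> 2" and jm: "j < m" and k': "k' < b ^ (m - 1)" and i: "i < b"
  shows "integral\<^sup>L unit_lborel (\<lambda>x. badic_ind b j k x * haar b m i k' x) = 0"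
proof -
  have b1: "b \<ge> 1" and m1: "m \<ge> 1" using b jm by auto
  define c where "c = real b powr (real m / 2 - 1)"
  define n where "n = b * k' + i"
  have "b ^ (m - j) = b * b ^ (m - 1 - j)"
    using jm by (simp add: power_Suc[symmetric] Suc_diff_Suc)
  then have div: "n div b ^ (m - j) = k' div b ^ (m - 1 - j)"
    using i by (simp add: div_mult2_eq n_def)
  have eq: "badic_ind b j k x * haar b m i k' x =
     (if k' div b ^ (m - 1 - j) = k
      then c * (real b * badic_ind b m n x - badic_ind b (m - 1) k' x) else 0)" for x
  proof -
    have "badic_ind b j k x * haar b m i k' x = c * (real b * (badic_ind b j k x * badic_ind b m n x)
            - badic_ind b j k x * badic_ind b (m - 1) k' x)"
      by (simp add: haar_eq_badic_ind[OF b m1] c_def n_def algebra_simps)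
    then show ?thesis
      using b1 jm div badic_ind_mult_finer[of b j m k x n] badic_ind_mult_finer[of b j "m - 1" k x k']
      by auto
  qed
  show ?thesis
  proof (cases "k' div b ^ (m - 1 - j) = k")
    case True
    then have "integral\<^sup>L unit_lborel (\<lambda>x. badic_ind b j k x * haar b m i k' x)
        = c * (real b * integral\<^sup>L unit_lborel (badic_ind b m n)
                 - integral\<^sup>L unit_lborel (badic_ind b (m - 1) k'))"
      using b1 by (simp add: eq integrable_badic_ind)
    also have "\<dots> = c * (real b * (1 / real b ^ m) - 1 / real b ^ (m - 1))"
      using b1 haar_child_index_less[OF m1 k' i] k' by (simp add: integral_badic_ind n_def)
    also have "real b ^ m = real b * real b ^ (m - 1)"
      using m1 by (simp add: power_Suc[symmetric])
    finally show ?thesis using b by simp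
  qed (simp add: eq)
qed

lemma integral_abs_haar_le:
  assumes b: "b \<ge> 2" and k': "k' < b ^ (m - 1)" and i: "i < b"
  shows "integral\<^sup>L unit_lborel (\<lambda>x. \<bar>haar b m i k' x\<bar>) \<le> 2 * real b powr (- real m / 2)"
proof (cases "m = 0")
  case True
  then have "integral\<^sup>L unit_lborel (\<lambda>x. \<bar>haar b m i k' x\<bar>) = integral\<^sup>L unit_lborel (badic_ind b 0 0)"
    using b by (simp add: haar_0 badic_ind_nonneg)
  also have "\<dots> = 1" using b by (subst integral_badic_ind) auto
  finally show ?thesis using True b by simp
next
  case False
  then have m1: "m \<ge> 1" by simp
  have b1: "b \<ge> 1" using b by simp
  define c where "c = real b powr (real m / 2 - 1)"
  define n where "n = b * k' + i"
  have "integral\<^sup>L unit_lborel (\<lambda>x. \<bar>haar b m i k' x\<bar>)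
      \<le> integral\<^sup>L unit_lborel (\<lambda>x. c * (real b * badic_ind b m n x + badic_ind b (m - 1) k' x))"
  proof (rule integral_mono)
    show "\<bar>haar b m i k' x\<bar> \<le> c * (real b * badic_ind b m n x + badic_ind b (m - 1) k' x)" for x
      using b m1
      by (auto simp: haar_eq_badic_ind c_def n_def abs_mult badic_ind_def intro!: mult_left_mono)
  qed (use b1 in \<open>simp_all add: integrable_haar integrable_badic_ind\<close>)
  also have "\<dots> = c * (real b * (1 / real b ^ m) + 1 / real b ^ (m - 1))"
    using b1 k' haar_child_index_less[OF m1 k' i]
    by (simp add: integrable_badic_ind integral_badic_ind n_def)
  also have "real b ^ m = real b * real b ^ (m - 1)"
    using m1 by (simp add: power_Suc[symmetric])
  also have "real b * (1 / (real b * real b ^ (m - 1))) = 1 / real b ^ (m - 1)"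
    using b by simp
  also have "c * (1 / real b ^ (m - 1) + 1 / real b ^ (m - 1)) = 2 * (c / real b powr (real m - 1))"
    using b m1 by (simp add: powr_realpow[symmetric] of_nat_diff)
  also have "c / real b powr (real m - 1) = real b powr (- real m / 2)"
    by (simp add: c_def powr_diff[symmetric])
  finally show ?thesis .
qed

lemma sum_abs_integral_badic_ind_times_le:
  fixes h :: "real \<Rightarrow> real"
  assumes b: "b \<ge> 1" and h: "h \<in> borel_measurable borel" "\<And>x. \<bar>h x\<bar> \<le> B"
  shows "(\<Sum>k<n. \<bar>integral\<^sup>L unit_lborel (\<lambda>x. badic_ind b j k x * h x)\<bar>)
           \<le> integral\<^sup>L unit_lborel (\<lambda>x. \<bar>h x\<bar>)"
proof -
  have bound: "\<bar>badic_ind b j k x * h x\<bar> \<le> B" for k x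
    using h(2)[of x] by (auto simp: badic_ind_def abs_mult)
  have int: "integrable unit_lborel (\<lambda>x. badic_ind b j k x * h x)"
            "integrable unit_lborel (\<lambda>x. badic_ind b j k x * \<bar>h x\<bar>)" for k
    using b h bound by (auto intro!: integrable_unit_lborel_bounded[where B=B] simp: abs_mult)
  have "(\<Sum>k<n. \<bar>integral\<^sup>L unit_lborel (\<lambda>x. badic_ind b j k x * h x)\<bar>)
      \<le> (\<Sum>k<n. integral\<^sup>L unit_lborel (\<lambda>x. badic_ind b j k x * \<bar>h x\<bar>))"
    using int by (intro sum_mono integral_abs_bound_integral) (auto simp: badic_ind_def abs_mult)
  also have "\<dots> = integral\<^sup>L unit_lborel (\<lambda>x. \<Sum>k<n. badic_ind b j k x * \<bar>h x\<bar>)"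
    using int by (simp add: Bochner_Integration.integral_sum)
  also have "\<dots> \<le> integral\<^sup>L unit_lborel (\<lambda>x. \<bar>h x\<bar>)"
  proof (rule integral_mono)
    show "(\<Sum>k<n. badic_ind b j k x * \<bar>h x\<bar>) \<le> \<bar>h x\<bar>" for x
      using mult_right_mono[OF sum_badic_ind_le_1[where n=n], of "\<bar>h x\<bar>"]
      by (simp add: sum_distrib_right)
  qed (use int h in \<open>auto intro: integrable_unit_lborel_bounded[where B=B]\<close>)
  finally show ?thesis .
qed

section \<open>Products of \<open>b\<close>-adic intervals\<close>

lemma cube_eq_PiM: "cube s = PiM {..<s} (\<lambda>_. unit_lborel)"
  by (simp add: cube_def unit_lborel_def)

lemma product_sigma_finite_unit_lborel: "product_sigma_finite (\<lambda>_::nat. unit_lborel)"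
  using finite_measure_unit_lborel
  by (auto simp: product_sigma_finite_def finite_measure_def)

lemma
  fixes F :: "nat \<Rightarrow> real \<Rightarrow> real"
  assumes "\<And>l. l < s \<Longrightarrow> integrable unit_lborel (F l)"
  shows integrable_cube_prod: "integrable (cube s) (\<lambda>x. \<Prod>l<s. F l (x l))"
    and integral_cube_prod:
      "integral\<^sup>L (cube s) (\<lambda>x. \<Prod>l<s. F l (x l)) = (\<Prod>l<s. integral\<^sup>L unit_lborel (F l))"
  unfolding cube_eq_PiM
   by (rule product_sigma_finite.product_integrable_prod[OF product_sigma_finite_unit_lborel],
       use assms in auto)
      (rule product_sigma_finite.product_integral_prod[OF product_sigma_finite_unit_lborel],
       use assms in auto)

definition badic_box :: "nat \<Rightarrow> nat \<Rightarrow> (nat \<Rightarrow> nat) \<Rightarrow> (nat \<Rightarrow> nat) \<Rightarrow> (nat \<Rightarrow> real) \<Rightarrow> real" where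
  "badic_box b s j k x = (\<Prod>l<s. badic_ind b (j l) (k l) (x l))"

definition box_index :: "nat \<Rightarrow> nat \<Rightarrow> (nat \<Rightarrow> nat) \<Rightarrow> (nat \<Rightarrow> nat) set" where
  "box_index b s j = PiE {..<s} (\<lambda>l. {..<b ^ j l})"

lemma finite_box_index: "finite (box_index b s j)"
  by (auto simp: box_index_def intro!: finite_PiE)

lemma card_box_index: "card (box_index b s j) = b ^ (\<Sum>l<s. j l)"
  by (simp add: box_index_def card_PiE power_sum)

lemma box_index_less: "k \<in> box_index b s j \<Longrightarrow> l < s \<Longrightarrow> k l < b ^ j l"
  by (auto simp: box_index_def)

lemma
  assumes "b \<ge> 1" "k \<in> box_index b s j"
  shows integrable_badic_box: "integrable (cube s) (badic_box b s j k)"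
    and integral_badic_box: "integral\<^sup>L (cube s) (badic_box b s j k) = 1 / real b ^ (\<Sum>l<s. j l)"
proof -
  have box: "badic_box b s j k = (\<lambda>x. \<Prod>l<s. badic_ind b (j l) (k l) (x l))"
    by (simp add: badic_box_def fun_eq_iff)
  show "integrable (cube s) (badic_box b s j k)"
    unfolding box using assms by (intro integrable_cube_prod integrable_badic_ind)
  have "integral\<^sup>L (cube s) (badic_box b s j k) = (\<Prod>l<s. integral\<^sup>L unit_lborel (badic_ind b (j l) (k l)))"
    unfolding box using assms by (intro integral_cube_prod integrable_badic_ind)
  also have "\<dots> = (\<Prod>l<s. 1 / real b ^ j l)"
    using assms box_index_less[OF assms(2)] by (intro prod.cong refl integral_badic_ind) auto
  also have "\<dots> = 1 / real b ^ (\<Sum>l<s. j l)"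
    by (simp add: prod_dividef power_sum)
  finally show "integral\<^sup>L (cube s) (badic_box b s j k) = 1 / real b ^ (\<Sum>l<s. j l)" .
qed

lemma
  assumes "b \<ge> 1"
  shows integrable_badic_box_times_Haar:
      "integrable (cube s) (\<lambda>x. badic_box b s j k x * Haar b s m i k' x)"
    and integral_badic_box_times_Haar:
      "integral\<^sup>L (cube s) (\<lambda>x. badic_box b s j k x * Haar b s m i k' x) =
         (\<Prod>l<s. integral\<^sup>L unit_lborel (\<lambda>y. badic_ind b (j l) (k l) y * haar b (m l) (i l) (k' l) y))"
proof -
  have eq: "(\<lambda>x. badic_box b s j k x * Haar b s m i k' x) =
      (\<lambda>x. \<Prod>l<s. badic_ind b (j l) (k l) (x l) * haar b (m l) (i l) (k' l) (x l))"
    by (simp add: badic_box_def Haar_def prod.distrib)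
  show "integrable (cube s) (\<lambda>x. badic_box b s j k x * Haar b s m i k' x)"
    unfolding eq using assms by (intro integrable_cube_prod integrable_badic_ind_times_haar)
  show "integral\<^sup>L (cube s) (\<lambda>x. badic_box b s j k x * Haar b s m i k' x) =
         (\<Prod>l<s. integral\<^sup>L unit_lborel (\<lambda>y. badic_ind b (j l) (k l) y * haar b (m l) (i l) (k' l) y))"
    unfolding eq using assms by (intro integral_cube_prod integrable_badic_ind_times_haar)
qed

lemma kiset_memberD:
  assumes "b \<ge> 1" "(k', i) \<in> kiset b s m" "l < s"
  shows "k' l < b ^ (m l - 1)" "i l < b"
proof -
  have "k' l \<in> delta_m1 b (m l)" "i l \<in> nabla b (m l)"
    using assms by (auto simp: kiset_def PiE_def Pi_def)
  then show "k' l < b ^ (m l - 1)" "i l < b"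
    using assms(1) by (auto simp: delta_m1_def nabla_def split: if_splits)
qed

text \<open>In each coordinate the intervals of one level are disjoint, so their coefficients sum to at
  most the \<open>L\<^sub>1\<close>-norm \<open>2 b\<^bsup>-m/2\<^esup>\<close> of the Haar function.\<close>
lemma sum_abs_integral_badic_box_times_Haar_le:
  assumes b: "b \<ge> 2" and ki: "(k', i) \<in> kiset b s m"
  shows "(\<Sum>k\<in>box_index b s j. \<bar>integral\<^sup>L (cube s) (\<lambda>x. badic_box b s j k x * Haar b s m i k' x)\<bar>)
         \<le> (if \<forall>l<s. m l \<le> j l then 2 ^ s * real b powr (- real (\<Sum>l<s. m l) / 2) else 0)"
proof -
  define c where "c l kk = integral\<^sup>L unit_lborel (\<lambda>y. badic_ind b (j l) kk y * haar b (m l) (i l) (k' l) y)"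
    for l kk
  have b1: "b \<ge> 1" using b by simp
  note ki_less = kiset_memberD[OF b1 ki]
  have "(\<Sum>k\<in>box_index b s j. \<bar>integral\<^sup>L (cube s) (\<lambda>x. badic_box b s j k x * Haar b s m i k' x)\<bar>)
        = (\<Sum>k\<in>box_index b s j. \<Prod>l<s. \<bar>c l (k l)\<bar>)"
    using b1 by (simp add: integral_badic_box_times_Haar abs_prod c_def)
  also have "\<dots> = (\<Prod>l<s. \<Sum>kk<b ^ j l. \<bar>c l kk\<bar>)"
    unfolding box_index_def by (rule prod_sum_PiE[symmetric]) auto
  also have "\<dots> \<le> (if \<forall>l<s. m l \<le> j l then 2 ^ s * real b powr (- real (\<Sum>l<s. m l) / 2) else 0)"
  proof (cases "\<forall>l<s. m l \<le> j l")
    case False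
    then obtain l where l: "l < s" "j l < m l" by auto
    have "c l kk = 0" for kk
      unfolding c_def using b l ki_less[OF l(1)] by (intro integral_badic_ind_times_haar_coarser)
    then have "(\<Prod>l<s. \<Sum>kk<b ^ j l. \<bar>c l kk\<bar>) = 0"
      using l by (intro prod_zero bexI[of _ l]) auto
    then show ?thesis using False by (simp del: prod_zero_iff)
  next
    case True
    have "(\<Prod>l<s. \<Sum>kk<b ^ j l. \<bar>c l kk\<bar>) \<le> (\<Prod>l<s. 2 * real b powr (- real (m l) / 2))"
    proof (rule prod_mono)
      fix l assume "l \<in> {..<s}"
      then have "(\<Sum>kk<b ^ j l. \<bar>c l kk\<bar>) \<le> integral\<^sup>L unit_lborel (\<lambda>x. \<bar>haar b (m l) (i l) (k' l) x\<bar>)"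
        unfolding c_def using b1
        by (intro sum_abs_integral_badic_ind_times_le[OF _ haar_measurable abs_haar_le])
      also have "\<dots> \<le> 2 * real b powr (- real (m l) / 2)"
        using b ki_less \<open>l \<in> {..<s}\<close> by (intro integral_abs_haar_le) auto
      finally show "0 \<le> (\<Sum>kk<b ^ j l. \<bar>c l kk\<bar>) \<and> (\<Sum>kk<b ^ j l. \<bar>c l kk\<bar>) \<le> 2 * real b powr (- real (m l) / 2)"
        by (simp add: sum_nonneg)
    qed
    also have "\<dots> = 2 ^ s * real b powr (\<Sum>l<s. - real (m l) / 2)"
      using b by (simp add: prod.distrib powr_sum)
    also have "(\<Sum>l<s. - real (m l) / 2) = - real (\<Sum>l<s. m l) / 2"
      by (simp add: sum_negf sum_divide_distrib)
    finally show ?thesis using True by simp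
  qed
  finally show ?thesis .
qed

section \<open>Counting multi-indices of a given level\<close>

lemma finite_levels: "finite (levels s L)"
  by (rule finite_subset[of _ "PiE {..<s} (\<lambda>_. {..L})"]) (auto simp: levels_def intro: finite_PiE)

lemma levels_sum: "j \<in> levels s L \<Longrightarrow> (\<Sum>l<s. j l) = L"
  by (simp add: levels_def)

lemma levels_extensional: "j \<in> levels s L \<Longrightarrow> j \<in> extensional {..<s}"
  by (auto simp: levels_def PiE_def)

lemma levelsI:
  assumes "j \<in> extensional {..<s}" "(\<Sum>l<s. j l) = L"
  shows "j \<in> levels s L"
proof -
  have "j l \<le> L" if "l < s" for l
    using that assms(2) member_le_sum[of l "{..<s}" j] by auto
  then show ?thesis using assms by (auto simp: levels_def PiE_def)
qed

lemma sum_lessThan_split_first: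
  fixes f :: "nat \<Rightarrow> 'a :: comm_monoid_add"
  assumes "s \<ge> 1"
  shows "(\<Sum>l<s. f l) = f 0 + (\<Sum>l\<in>{1..<s}. f l)"
proof -
  have "{..<s} = insert 0 {1..<s}" using assms by auto
  then show ?thesis by simp
qed

lemma levels_eqI:
  assumes j1: "j1 \<in> levels s L" and j2: "j2 \<in> levels s L"
    and tail: "\<And>l. l \<in> {1..<s} \<Longrightarrow> j1 l = j2 l"
  shows "j1 = j2"
proof (rule extensionalityI[OF levels_extensional[OF j1] levels_extensional[OF j2]])
  fix l assume "l \<in> {..<s}"
  then have s: "s \<ge> 1" by simp
  have "(\<Sum>l\<in>{1..<s}. j1 l) = (\<Sum>l\<in>{1..<s}. j2 l)"
    using tail by (rule sum.cong[OF refl])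
  then have "j1 0 = j2 0"
    using levels_sum[OF j1] levels_sum[OF j2] sum_lessThan_split_first[OF s, of j1]
      sum_lessThan_split_first[OF s, of j2] by linarith
  then show "j1 l = j2 l"
    using tail \<open>l \<in> {..<s}\<close> by (cases "l = 0") auto
qed

definition complete_level :: "nat \<Rightarrow> nat \<Rightarrow> (nat \<Rightarrow> nat) \<Rightarrow> nat \<Rightarrow> nat" where
  "complete_level s L d =
     (\<lambda>l. if l = 0 then L - (\<Sum>l'\<in>{1..<s}. d l') else if l < s then d l else undefined)"

lemma complete_level_in_levels:
  assumes "s \<ge> 1" "(\<Sum>l\<in>{1..<s}. d l) \<le> L"
  shows "complete_level s L d \<in> levels s L"
proof (rule levelsI)
  show "complete_level s L d \<in> extensional {..<s}"
    using assms by (auto simp: complete_level_def extensional_def)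
  have "(\<Sum>l\<in>{1..<s}. complete_level s L d l) = (\<Sum>l\<in>{1..<s}. d l)"
    by (rule sum.cong) (auto simp: complete_level_def)
  then show "(\<Sum>l<s. complete_level s L d l) = L"
    using assms by (simp add: sum_lessThan_split_first complete_level_def)
qed

lemma levels_nonempty: "s \<ge> 1 \<Longrightarrow> levels s L \<noteq> {}"
  using complete_level_in_levels[of s "\<lambda>_. 0" L] by auto

lemma card_levels_pos: "s \<ge> 1 \<Longrightarrow> 0 < card (levels s L)"
  using levels_nonempty finite_levels by (simp add: card_gt_0_iff)

lemma card_levels_ge:
  assumes s: "s \<ge> 1"
  shows "(real L / real s) ^ (s - 1) \<le> real (card (levels s L))"
proof -
  define K where "K = L div s + 1"
  define D where "D = PiE {1..<s} (\<lambda>_. {..<K})"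
  have "(\<Sum>l\<in>{1..<s}. d l) \<le> L" if "d \<in> D" for d
  proof -
    have "(\<Sum>l\<in>{1..<s}. d l) \<le> (\<Sum>l\<in>{1..<s}. L div s)"
      using that by (intro sum_mono) (auto simp: D_def K_def less_Suc_eq_le)
    also have "\<dots> \<le> s * (L div s)" by simp
    also have "\<dots> \<le> L" by simp
    finally show ?thesis .
  qed
  then have "complete_level s L ` D \<subseteq> levels s L"
    using s by (auto intro: complete_level_in_levels)
  moreover have "inj_on (complete_level s L) D"
  proof (rule inj_onI)
    fix d1 d2 assume d: "d1 \<in> D" "d2 \<in> D" and eq: "complete_level s L d1 = complete_level s L d2"
    have "d1 l = d2 l" if "l \<in> {1..<s}" for l
      using fun_cong[OF eq, of l] that by (simp add: complete_level_def)
    then show "d1 = d2"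
      using d unfolding D_def by (intro extensionalityI[of _ "{1..<s}"]) (auto simp: PiE_def)
  qed
  ultimately have "card D \<le> card (levels s L)"
    by (intro card_inj_on_le finite_levels)
  moreover have "card D = K ^ (s - 1)" by (simp add: D_def card_PiE)
  moreover have "real L / real s \<le> real K"
  proof -
    have "L mod s < s" "s * (L div s) + L mod s = L"
      using s by simp_all
    then have "L < s * K"
      unfolding K_def distrib_left mult_1_right by linarith
    then have "real L < real s * real K" by (metis of_nat_less_iff of_nat_mult)
    then show ?thesis using s by (simp add: divide_le_eq mult.commute)
  qed
  ultimately have "(real L / real s) ^ (s - 1) \<le> real (card D)"
    by (simp add: power_mono)
  also have "\<dots> \<le> real (card (levels s L))"
    using \<open>card D \<le> card (levels s L)\<close> by simp
  finally show ?thesis .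
qed

lemma card_levels_mono:
  assumes s: "s \<ge> 1" and LL: "L' \<le> L"
  shows "card (levels s L') \<le> card (levels s L)"
proof (rule card_inj_on_le[OF _ _ finite_levels])
  define raise where "raise m = m(0 := m 0 + (L - L'))" for m :: "nat \<Rightarrow> nat"
  show "inj_on raise (levels s L')"
  proof (rule inj_onI)
    fix m1 m2 assume "m1 \<in> levels s L'" "m2 \<in> levels s L'" and eq: "raise m1 = raise m2"
    have "m1 l = m2 l" for l
      using fun_cong[OF eq, of l] by (cases "l = 0") (simp_all add: raise_def)
    then show "m1 = m2" by blast
  qed
  show "raise ` levels s L' \<subseteq> levels s L"
  proof
    fix y assume "y \<in> raise ` levels s L'"
    then obtain m where m: "m \<in> levels s L'" and y: "y = raise m" by auto
    show "y \<in> levels s L"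
    proof (rule levelsI)
      show "y \<in> extensional {..<s}"
        using s levels_extensional[OF m] by (auto simp: y raise_def extensional_def)
      have "(\<Sum>l<s. y l) = (\<Sum>l<s. m l + (if l = 0 then L - L' else 0))"
        unfolding y raise_def by (intro sum.cong) auto
      then show "(\<Sum>l<s. y l) = L"
        using s LL levels_sum[OF m] by (simp add: sum.distrib)
    qed
  qed
qed

lemma card_dominating_levels_le:
  assumes s: "s \<ge> 1" and mL: "(\<Sum>l<s. m l) \<le> L"
  shows "card {j \<in> levels s L. \<forall>l<s. m l \<le> j l} \<le> (L - (\<Sum>l<s. m l) + 1) ^ (s - 1)"
proof -
  define A where "A = {j \<in> levels s L. \<forall>l<s. m l \<le> j l}"
  define excess where "excess j = (\<lambda>l\<in>{1..<s}. j l - m l)" for j :: "nat \<Rightarrow> nat"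
  have "inj_on excess A"
  proof (rule inj_onI)
    fix j1 j2 assume j: "j1 \<in> A" "j2 \<in> A" and eq: "excess j1 = excess j2"
    show "j1 = j2"
    proof (rule levels_eqI[of j1 s L j2])
      show "j1 \<in> levels s L" "j2 \<in> levels s L" using j by (simp_all add: A_def)
      fix l assume l: "l \<in> {1..<s}"
      have "j1 l - m l = j2 l - m l"
        using fun_cong[OF eq, of l] l by (simp add: excess_def)
      moreover have "m l \<le> j1 l" "m l \<le> j2 l" using j l by (auto simp: A_def)
      ultimately show "j1 l = j2 l" by simp
    qed
  qed
  moreover have "excess ` A \<subseteq> PiE {1..<s} (\<lambda>_. {..L - (\<Sum>l<s. m l)})"
  proof
    fix y assume "y \<in> excess ` A"
    then obtain j where j: "j \<in> A" and y: "y = excess j" by auto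
    have "j l - m l \<le> L - (\<Sum>l<s. m l)" if l: "l < s" for l
    proof -
      have "(\<Sum>l'\<in>{..<s} - {l}. m l') \<le> (\<Sum>l'\<in>{..<s} - {l}. j l')"
        using j by (intro sum_mono) (auto simp: A_def)
      moreover have "(\<Sum>l'<s. j l') = j l + (\<Sum>l'\<in>{..<s} - {l}. j l')"
        "(\<Sum>l'<s. m l') = m l + (\<Sum>l'\<in>{..<s} - {l}. m l')"
        using l by (simp_all add: sum.remove)
      ultimately show ?thesis
        using j levels_sum[of j s L] by (auto simp: A_def)
    qed
    then show "y \<in> PiE {1..<s} (\<lambda>_. {..L - (\<Sum>l<s. m l)})"
      unfolding y excess_def by auto
  qed
  ultimately have "card A \<le> card (PiE {1..<s} (\<lambda>_. {..L - (\<Sum>l<s. m l)}))"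
    by (intro card_inj_on_le) (auto intro: finite_PiE)
  then show ?thesis by (simp add: A_def card_PiE)
qed

lemma dominating_levels_empty:
  assumes "L < (\<Sum>l<s. m l)"
  shows "{j \<in> levels s L. \<forall>l<s. m l \<le> j l} = {}"
proof -
  have "\<not> (\<forall>l<s. m l \<le> j l)" if "j \<in> levels s L" for j
  proof
    assume "\<forall>l<s. m l \<le> j l"
    then have "(\<Sum>l<s. m l) \<le> (\<Sum>l<s. j l)" by (intro sum_mono) auto
    then show False using assms levels_sum[OF that] by simp
  qed
  then show ?thesis by blast
qed

section \<open>Bounds on the wavelet norm\<close>

lemma finite_kiset: "finite (kiset b s m)"
  by (auto simp: kiset_def delta_m1_def nabla_def intro!: finite_PiE)

lemma kiset_nonempty: "b \<ge> 1 \<Longrightarrow> kiset b s m \<noteq> {}"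
  using PiE_eq_empty_iff[of "{..<s}" "\<lambda>l. delta_m1 b (m l)"]
    PiE_eq_empty_iff[of "{..<s}" "\<lambda>l. nabla b (m l)"]
  by (auto simp: kiset_def delta_m1_def nabla_def)

lemma card_kiset:
  assumes "b \<ge> 1"
  shows "card (kiset b s m) = b ^ (\<Sum>l<s. m l)"
proof -
  have "card (delta_m1 b (m l)) * card (nabla b (m l)) = b ^ m l" for l
    using assms by (cases "m l") (auto simp: delta_m1_def nabla_def)
  then show ?thesis
    by (simp add: kiset_def card_cartesian_product card_PiE prod.distrib[symmetric] power_sum)
qed

lemma einv_bounds: "1 \<le> p \<Longrightarrow> 0 \<le> einv p \<and> einv p \<le> 1"
  by (cases p) (auto simp: einv_def)

lemma wterm_nonneg:
  assumes "b \<ge> 1"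
  shows "0 \<le> wterm b \<alpha> s p f m"
proof -
  obtain z where z: "z \<in> kiset b s m"
    using kiset_nonempty[OF assms] by blast
  have "(\<lambda>(kv, iv). \<bar>wcoef b s f m iv kv\<bar>) z \<le> Max ((\<lambda>(kv, iv). \<bar>wcoef b s f m iv kv\<bar>) ` kiset b s m)"
    using z by (intro Max_ge finite_imageI finite_kiset imageI)
  moreover have "0 \<le> (\<lambda>(kv, iv). \<bar>wcoef b s f m iv kv\<bar>) z"
    by (cases z) simp
  ultimately have "0 \<le> Max ((\<lambda>(kv, iv). \<bar>wcoef b s f m iv kv\<bar>) ` kiset b s m)"
    by linarith
  then show ?thesis
    by (simp add: wterm_def inner_p_def)
qed

text \<open>There are \<open>b\<^bsup>|m|\<^esup>\<close> coefficients, so their \<open>l\<^sub>p\<close>-norm is at most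
  \<open>b\<^bsup>|m|/p\<^esup> B\<close>, which cancels the factor \<open>b\<^bsup>-|m|/p\<^esup>\<close> in the norm.\<close>
lemma wterm_le_coefficient_bound:
  assumes b: "b \<ge> 1" and p: "1 \<le> p" and B: "B \<ge> 0"
    and coef: "\<And>k' i. (k', i) \<in> kiset b s m \<Longrightarrow> \<bar>wcoef b s f m i k'\<bar> \<le> B"
  shows "wterm b \<alpha> s p f m \<le> real b powr ((\<alpha> + 1/2) * real (\<Sum>l<s. m l)) * B"
proof -
  define Lm where "Lm = (\<Sum>l<s. m l)"
  have inner: "inner_p b s p f m \<le> real b powr (einv p * real Lm) * B"
  proof (cases "p = \<infinity>")
    case True
    have "Max ((\<lambda>(kv, iv). \<bar>wcoef b s f m iv kv\<bar>) ` kiset b s m) \<le> B"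
      using coef kiset_nonempty[OF b] finite_kiset by (subst Max_le_iff) auto
    then show ?thesis using True b by (simp add: inner_p_def einv_def)
  next
    case False
    then obtain r where r: "p = ereal r" "r \<ge> 1" using p by (cases p) auto
    have "(\<Sum>(kv, iv)\<in>kiset b s m. \<bar>wcoef b s f m iv kv\<bar> powr r) \<le> (\<Sum>_\<in>kiset b s m. B powr r)"
      using coef r by (intro sum_mono) (auto intro!: powr_mono2)
    also have "\<dots> = real b powr real Lm * B powr r"
      using b by (simp add: card_kiset Lm_def[symmetric] powr_realpow)
    finally have "inner_p b s p f m \<le> (real b powr real Lm * B powr r) powr (1 / r)"
      using r False by (auto simp: inner_p_def intro!: powr_mono2 sum_nonneg)
    also have "\<dots> = real b powr (einv p * real Lm) * B"
      using r B by (simp add: powr_mult powr_powr einv_def mult.commute)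
    finally show ?thesis .
  qed
  have "wterm b \<alpha> s p f m \<le> real b powr ((\<alpha> - einv p + 1/2) * real Lm) * (real b powr (einv p * real Lm) * B)"
    unfolding wterm_def Lm_def[symmetric] by (intro mult_left_mono inner) simp
  also have "\<dots> = real b powr ((\<alpha> + 1/2) * real Lm) * B"
    by (simp add: mult.assoc[symmetric] powr_add[symmetric] algebra_simps)
  finally show ?thesis unfolding Lm_def .
qed

lemma wav_norm_infinity_le:
  assumes "\<And>m. wterm b \<alpha> s p f m \<le> B"
  shows "wav_norm b \<alpha> s p \<infinity> f \<le> ereal B"
  using assms by (simp add: wav_norm_def SUP_least)

lemma wav_norm_finite_eq:
  assumes b: "b \<ge> 1" and r: "r > 0"
    and vanish: "\<And>m. L < (\<Sum>l<s. m l) \<Longrightarrow> wterm b \<alpha> s p f m = 0"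
  shows "wav_norm b \<alpha> s p (ereal r) f =
           ereal ((\<Sum>L'\<le>L. \<Sum>m\<in>levels s L'. wterm b \<alpha> s p f m powr r) powr (1 / r))"
proof -
  define T where "T L' = (\<Sum>m\<in>levels s L'. wterm b \<alpha> s p f m powr r)" for L'
  have T_nonneg: "0 \<le> T L'" for L'
    by (simp add: T_def sum_nonneg)
  have "T L' = 0" if "L < L'" for L'
    unfolding T_def using vanish levels_sum that r by (intro sum.neutral) auto
  then have "(\<Sum>L'. ennreal (T L')) = (\<Sum>L'\<le>L. ennreal (T L'))"
    by (intro suminf_finite) auto
  also have "\<dots> = ennreal (\<Sum>L'\<le>L. T L')"
    using T_nonneg by simp
  finally show ?thesis
    using T_nonneg by (simp add: wav_norm_def T_def[symmetric] sum_nonneg)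
qed

lemma wav_norm_infinity_le_profile:
  fixes h :: "nat \<Rightarrow> real"
  assumes Z: "0 \<le> Z" and h: "\<And>d. 0 \<le> h d" "\<And>d. h d \<le> K"
    and vanish: "\<And>m. L < (\<Sum>l<s. m l) \<Longrightarrow> wterm b \<alpha> s p f m = 0"
    and profile: "\<And>m. (\<Sum>l<s. m l) \<le> L \<Longrightarrow> wterm b \<alpha> s p f m \<le> Z * h (L - (\<Sum>l<s. m l))"
  shows "wav_norm b \<alpha> s p \<infinity> f \<le> ereal (Z * K)"
proof (rule wav_norm_infinity_le)
  fix m
  show "wterm b \<alpha> s p f m \<le> Z * K"
  proof (cases "(\<Sum>l<s. m l) \<le> L")
    case True
    show ?thesis
      using profile[OF True] mult_left_mono[OF h(2) Z] by (rule order.trans)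
  next
    case False
    then show ?thesis
      using vanish[of m] Z order.trans[OF h] by simp
  qed
qed

text \<open>No level below \<open>L\<close> has more multi-indices than level \<open>L\<close>; this is where the factor
  \<open>|levels s L|\<^bsup>1/r\<^esup>\<close> comes from.\<close>
lemma wav_norm_finite_le_profile:
  fixes h :: "nat \<Rightarrow> real"
  assumes b: "b \<ge> 1" and s: "s \<ge> 1" and r: "r \<ge> 1" and Z: "0 \<le> Z" and h: "\<And>d. 0 \<le> h d"
    and vanish: "\<And>m. L < (\<Sum>l<s. m l) \<Longrightarrow> wterm b \<alpha> s p f m = 0"
    and profile: "\<And>m. (\<Sum>l<s. m l) \<le> L \<Longrightarrow> wterm b \<alpha> s p f m \<le> Z * h (L - (\<Sum>l<s. m l))"
    and K: "\<And>n. (\<Sum>d\<le>n. h d powr r) \<le> K"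
  shows "wav_norm b \<alpha> s p (ereal r) f
           \<le> ereal (Z * K powr (1 / r) * real (card (levels s L)) powr (1 / r))"
proof -
  define nJ where "nJ = real (card (levels s L))"
  have W: "0 \<le> wterm b \<alpha> s p f m" for m
    using b by (rule wterm_nonneg)
  have level: "(\<Sum>m\<in>levels s L'. wterm b \<alpha> s p f m powr r) \<le> nJ * (Z powr r * h (L - L') powr r)"
    if "L' \<le> L" for L'
  proof -
    have "(\<Sum>m\<in>levels s L'. wterm b \<alpha> s p f m powr r) \<le> (\<Sum>m\<in>levels s L'. (Z * h (L - L')) powr r)"
      using that profile levels_sum W r by (intro sum_mono powr_mono2) auto
    also have "\<dots> \<le> nJ * (Z powr r * h (L - L') powr r)"
      using card_levels_mono[OF s that] Z h
      by (simp add: nJ_def powr_mult mult_right_mono)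
    finally show ?thesis .
  qed
  have "(\<Sum>L'\<le>L. \<Sum>m\<in>levels s L'. wterm b \<alpha> s p f m powr r)
      \<le> (\<Sum>L'\<le>L. nJ * (Z powr r * h (L - L') powr r))"
    by (rule sum_mono) (simp add: level)
  also have "\<dots> = nJ * Z powr r * (\<Sum>L'\<le>L. h (L - L') powr r)"
    by (simp add: sum_distrib_left mult.assoc)
  also have "(\<Sum>L'\<le>L. h (L - L') powr r) = (\<Sum>d\<le>L. h d powr r)"
    using sum.atLeastAtMost_rev[of "\<lambda>d. h d powr r" 0 L] by (simp add: atLeast0AtMost)
  finally have sum_le: "(\<Sum>L'\<le>L. \<Sum>m\<in>levels s L'. wterm b \<alpha> s p f m powr r) \<le> nJ * Z powr r * K"
    using card_levels_pos[OF s] Z K[of L] by (simp add: nJ_def mult_left_mono order_trans)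
  have "wav_norm b \<alpha> s p (ereal r) f
      = ereal ((\<Sum>L'\<le>L. \<Sum>m\<in>levels s L'. wterm b \<alpha> s p f m powr r) powr (1 / r))"
    using r vanish b by (simp add: wav_norm_finite_eq)
  also have "\<dots> \<le> ereal ((nJ * Z powr r * K) powr (1 / r))"
    using sum_le r W by (simp add: powr_mono2 sum_nonneg)
  also have "(nJ * Z powr r * K) powr (1 / r) = Z * K powr (1 / r) * nJ powr (1 / r)"
    using r Z card_levels_pos[OF s] K[of 0] h
    by (simp add: nJ_def powr_mult powr_powr sum_nonneg)
  finally show ?thesis
    by (simp add: nJ_def)
qed

text \<open>For \<open>q = \<infinity>\<close> the value \<open>1\<close> is a dummy: a bound on the partial sums of a nonnegative
  sequence then also bounds each of its terms.\<close>
definition sum_exponent :: "ereal \<Rightarrow> real" where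
  "sum_exponent q = (if q = \<infinity> then 1 else real_of_ereal q)"

lemma sum_exponent_ge_1: "1 \<le> q \<Longrightarrow> 1 \<le> sum_exponent q"
  by (cases q) (auto simp: sum_exponent_def)

lemma wav_norm_le_profile:
  fixes h :: "nat \<Rightarrow> real"
  assumes b: "b \<ge> 1" and s: "s \<ge> 1" and q: "1 \<le> q" and Z: "0 \<le> Z" and h: "\<And>d. 0 \<le> h d"
    and vanish: "\<And>m. L < (\<Sum>l<s. m l) \<Longrightarrow> wterm b \<alpha> s p f m = 0"
    and profile: "\<And>m. (\<Sum>l<s. m l) \<le> L \<Longrightarrow> wterm b \<alpha> s p f m \<le> Z * h (L - (\<Sum>l<s. m l))"
    and K: "\<And>n. (\<Sum>d\<le>n. h d powr sum_exponent q) \<le> K"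
  shows "wav_norm b \<alpha> s p q f
           \<le> ereal (Z * K powr (1 / sum_exponent q) * real (card (levels s L)) powr einv q)"
proof (cases "q = \<infinity>")
  case True
  have hK: "h d \<le> K" for d
    using h K[of d] member_le_sum[of d "{..d}" "\<lambda>d. h d powr 1"] by (simp add: True sum_exponent_def)
  then have "wav_norm b \<alpha> s p q f \<le> ereal (Z * K)"
    using True wav_norm_infinity_le_profile[OF Z h hK vanish profile] by simp
  moreover have "0 \<le> K"
    using order.trans[OF h hK] .
  ultimately show ?thesis
    using True card_levels_pos[OF s, of L] by (simp add: sum_exponent_def einv_def)
next
  case False
  then obtain r where "q = ereal r" "r \<ge> 1" using q by (cases q) auto
  then show ?thesis
    using wav_norm_finite_le_profile[OF b s _ Z h vanish profile, of r K] K
    by (simp add: sum_exponent_def einv_def)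
qed

section \<open>The fooling function\<close>

lemma badic_ind_neq_0_iff: "badic_ind b j k x \<noteq> 0 \<longleftrightarrow> \<lfloor>real b ^ j * x\<rfloor> = int k"
  by (simp add: badic_ind_def)

lemma badic_box_neq_0_iff:
  "badic_box b s j k y \<noteq> 0 \<longleftrightarrow> (\<forall>l<s. \<lfloor>real b ^ j l * y l\<rfloor> = int (k l))"
  by (auto simp: badic_box_def badic_ind_neq_0_iff)

lemma badic_ind_in_Vj:
  assumes b: "b \<ge> 1" and k: "k < b ^ j"
  shows "badic_ind b j k \<in> Vj b j"
  unfolding Vj_def
proof (intro CollectI exI[of _ "\<lambda>n. if n = k then 1 else 0"] allI)
  fix x :: real
  show "badic_ind b j k x = (if 0 \<le> x \<and> x < 1 then (if nat \<lfloor>real b ^ j * x\<rfloor> = k then 1 else 0) else 0)"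
  proof (cases "0 \<le> x \<and> x < 1")
    case True
    then have "\<lfloor>real b ^ j * x\<rfloor> \<ge> 0" using b by simp
    then show ?thesis using True by (auto simp: badic_ind_def)
  next
    case False
    have "\<lfloor>real b ^ j * x\<rfloor> \<noteq> int k"
    proof
      assume "\<lfloor>real b ^ j * x\<rfloor> = int k"
      then have "real k \<le> real b ^ j * x" "real b ^ j * x < real k + 1" by linarith+
      moreover have "real k + 1 \<le> real b ^ j"
        using k by (metis Suc_leI of_nat_Suc of_nat_le_iff of_nat_power add.commute)
      ultimately have "0 \<le> real b ^ j * x" "real b ^ j * x < real b ^ j" by linarith+
      moreover have "real b ^ j > 0" using b by simp
      ultimately show False
        using False by (simp add: zero_le_mult_iff)
    qed
    then show ?thesis using False by (simp add: badic_ind_def)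
  qed
qed

lemma sum_badic_boxes_in_VsL:
  assumes b: "b \<ge> 1" and S: "finite S" "S \<subseteq> Sigma (levels s L) (box_index b s)"
  shows "(\<lambda>y. \<Sum>p\<in>S. c p * badic_box b s (fst p) (snd p) y) \<in> VsL b s L"
proof -
  obtain h where h: "bij_betw h {..<card S} S"
    using ex_bij_betw_nat_finite[OF S(1)] by (auto simp: atLeast0LessThan)
  have hS: "fst (h t) \<in> levels s L" "snd (h t) \<in> box_index b s (fst (h t))" if "t < card S" for t
  proof -
    have "h t \<in> Sigma (levels s L) (box_index b s)"
      using h S(2) that by (auto simp: bij_betw_def)
    then show "fst (h t) \<in> levels s L" "snd (h t) \<in> box_index b s (fst (h t))"
      by (auto simp: mem_Sigma_iff)
  qed
  have "(\<lambda>y. \<Sum>p\<in>S. c p * badic_box b s (fst p) (snd p) y) =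
      (\<lambda>y. \<Sum>t<card S. c (h t) * (\<Prod>l<s. badic_ind b (fst (h t) l) (snd (h t) l) (y l)))"
    by (rule ext, subst sum.reindex_bij_betw[OF h, symmetric]) (simp add: badic_box_def)
  moreover have "(\<Sum>l<s. fst (h t) l) = L \<and>
      (\<forall>l<s. badic_ind b (fst (h t) l) (snd (h t) l) \<in> Vj b (fst (h t) l))" if "t < card S" for t
    using hS[OF that] badic_ind_in_Vj[OF b box_index_less[OF hS(2)[OF that]]]
    by (simp add: levels_sum)
  ultimately show ?thesis
    unfolding VsL_def
    by (intro CollectI exI[of _ "card S"] exI[of _ "\<lambda>t. c (h t)"] exI[of _ "\<lambda>t. fst (h t)"]
        exI[of _ "\<lambda>t l. badic_ind b (fst (h t) l) (snd (h t) l)"]) simp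
qed

definition empty_boxes :: "nat \<Rightarrow> nat \<Rightarrow> nat \<Rightarrow> (nat \<Rightarrow> nat \<Rightarrow> real) \<Rightarrow> (nat \<Rightarrow> nat) \<Rightarrow> (nat \<Rightarrow> nat) set"
  where "empty_boxes b s N x j = {k \<in> box_index b s j. \<forall>i<N. badic_box b s j k (x i) = 0}"

definition fooling_fun :: "nat \<Rightarrow> nat \<Rightarrow> nat \<Rightarrow> (nat \<Rightarrow> nat \<Rightarrow> real) \<Rightarrow> nat \<Rightarrow> (nat \<Rightarrow> real) \<Rightarrow> real"
  where "fooling_fun b s N x L y =
           (\<Sum>j\<in>levels s L. \<Sum>k\<in>empty_boxes b s N x j. badic_box b s j k y)"

lemma empty_boxes_subset: "empty_boxes b s N x j \<subseteq> box_index b s j"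
  by (auto simp: empty_boxes_def)

lemma finite_empty_boxes: "finite (empty_boxes b s N x j)"
  using finite_subset[OF empty_boxes_subset finite_box_index] .

lemma fooling_fun_at_points: "i < N \<Longrightarrow> fooling_fun b s N x L (x i) = 0"
  by (simp add: fooling_fun_def empty_boxes_def)

lemma scaled_fooling_fun_in_Htilde:
  assumes "b \<ge> 1"
  shows "(\<lambda>y. a * fooling_fun b s N x L y) \<in> Htilde b s"
proof -
  have "(\<lambda>y. a * fooling_fun b s N x L y) =
      (\<lambda>y. \<Sum>p\<in>Sigma (levels s L) (empty_boxes b s N x). a * badic_box b s (fst p) (snd p) y)"
    by (simp add: fooling_fun_def sum_distrib_left sum.Sigma finite_levels finite_empty_boxes split_beta)
  also have "\<dots> \<in> VsL b s L"
    using assms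
    by (intro sum_badic_boxes_in_VsL finite_SigmaI finite_levels finite_empty_boxes)
       (auto simp: empty_boxes_def)
  finally show ?thesis
    unfolding Htilde_def by blast
qed

lemma card_empty_boxes_ge:
  assumes "j \<in> levels s L"
  shows "b ^ L \<le> card (empty_boxes b s N x j) + N"
proof -
  define box_of where "box_of i = (\<lambda>l\<in>{..<s}. nat \<lfloor>real b ^ j l * x i l\<rfloor>)" for i
  have sub: "box_index b s j - empty_boxes b s N x j \<subseteq> box_of ` {..<N}"
  proof
    fix k assume k: "k \<in> box_index b s j - empty_boxes b s N x j"
    then obtain i where "i < N" "badic_box b s j k (x i) \<noteq> 0"
      by (auto simp: empty_boxes_def)
    then have "\<forall>l<s. \<lfloor>real b ^ j l * x i l\<rfloor> = int (k l)"
      by (simp add: badic_box_neq_0_iff)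
    then have "k = box_of i"
      using k by (intro extensionalityI[of _ "{..<s}"]) (auto simp: box_of_def box_index_def PiE_def)
    then show "k \<in> box_of ` {..<N}" using \<open>i < N\<close> by blast
  qed
  have "card (box_index b s j - empty_boxes b s N x j) \<le> N"
    using card_mono[OF _ sub] card_image_le[of "{..<N}" box_of] by simp
  moreover have "card (box_index b s j) \<le> card (empty_boxes b s N x j) + card (box_index b s j - empty_boxes b s N x j)"
    using card_Un_le[of "empty_boxes b s N x j" "box_index b s j - empty_boxes b s N x j"]
    by (simp add: Un_absorb1 empty_boxes_def)
  ultimately show ?thesis
    using assms by (simp add: card_box_index levels_sum)
qed

lemma integral_fooling_fun_ge:
  assumes b: "b \<ge> 1" and L: "2 * N \<le> b ^ L"
  shows "real (card (levels s L)) / 2 \<le> integral\<^sup>L (cube s) (fooling_fun b s N x L)"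
proof -
  have "integral\<^sup>L (cube s) (fooling_fun b s N x L) =
      (\<Sum>j\<in>levels s L. \<Sum>k\<in>empty_boxes b s N x j. integral\<^sup>L (cube s) (badic_box b s j k))"
    using b empty_boxes_subset unfolding fooling_fun_def[abs_def]
    by (simp add: Bochner_Integration.integral_sum integrable_badic_box subset_iff)
  also have "\<dots> = (\<Sum>j\<in>levels s L. real (card (empty_boxes b s N x j)) / real b ^ L)"
  proof (rule sum.cong[OF refl])
    fix j assume j: "j \<in> levels s L"
    have "(\<Sum>k\<in>empty_boxes b s N x j. integral\<^sup>L (cube s) (badic_box b s j k))
        = (\<Sum>k\<in>empty_boxes b s N x j. 1 / real b ^ L)"
      using b levels_sum[OF j]
      by (intro sum.cong refl) (auto simp: integral_badic_box dest!: subsetD[OF empty_boxes_subset])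
    then show "(\<Sum>k\<in>empty_boxes b s N x j. integral\<^sup>L (cube s) (badic_box b s j k))
        = real (card (empty_boxes b s N x j)) / real b ^ L"
      by simp
  qed
  also have "\<dots> \<ge> (\<Sum>j\<in>levels s L. 1 / 2)"
  proof (rule sum_mono)
    fix j assume "j \<in> levels s L"
    then have "real b ^ L \<le> 2 * real (card (empty_boxes b s N x j))"
      using card_empty_boxes_ge[of j s L b N x] L by (simp flip: of_nat_power)
    then show "1 / 2 \<le> real (card (empty_boxes b s N x j)) / real b ^ L"
      using b by (simp add: field_simps)
  qed
  finally show ?thesis by simp
qed

text \<open>Only boxes whose shape \<open>j\<close> dominates \<open>m\<close> see the Haar functions of shape \<open>m\<close>.\<close>
lemma abs_wcoef_scaled_fooling_fun_le:
  assumes b: "b \<ge> 2" and a: "a \<ge> 0" and ki: "(k', i) \<in> kiset b s m"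
  shows "\<bar>wcoef b s (\<lambda>y. a * fooling_fun b s N x L y) m i k'\<bar>
     \<le> a * 2 ^ s * real b powr (- real (\<Sum>l<s. m l) / 2) * real (card {j \<in> levels s L. \<forall>l<s. m l \<le> j l})"
proof -
  define X where "X = 2 ^ s * real b powr (- real (\<Sum>l<s. m l) / 2)"
  define c where "c j k = integral\<^sup>L (cube s) (\<lambda>y. badic_box b s j k y * Haar b s m i k' y)" for j k
  have b1: "b \<ge> 1" using b by simp
  have "wcoef b s (\<lambda>y. a * fooling_fun b s N x L y) m i k' =
      (\<Sum>j\<in>levels s L. \<Sum>k\<in>empty_boxes b s N x j. a * c j k)"
    using b1 unfolding wcoef_def fooling_fun_def c_def
    by (simp add: sum_distrib_left sum_distrib_right mult.assoc Bochner_Integration.integral_sum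
        integrable_badic_box_times_Haar)
  also have "\<bar>\<dots>\<bar> \<le> (\<Sum>j\<in>levels s L. \<Sum>k\<in>empty_boxes b s N x j. \<bar>a * c j k\<bar>)"
    by (rule order.trans[OF sum_abs sum_mono[OF sum_abs]])
  also have "\<dots> = a * (\<Sum>j\<in>levels s L. \<Sum>k\<in>empty_boxes b s N x j. \<bar>c j k\<bar>)"
    using a by (simp add: abs_mult sum_distrib_left)
  also have "\<dots> \<le> a * (\<Sum>j\<in>levels s L. \<Sum>k\<in>box_index b s j. \<bar>c j k\<bar>)"
    using a empty_boxes_subset finite_box_index by (intro mult_left_mono sum_mono sum_mono2) auto
  also have "\<dots> \<le> a * (\<Sum>j\<in>levels s L. if \<forall>l<s. m l \<le> j l then X else 0)"
  proof (intro mult_left_mono[OF sum_mono a])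
    fix j
    show "(\<Sum>k\<in>box_index b s j. \<bar>c j k\<bar>) \<le> (if \<forall>l<s. m l \<le> j l then X else 0)"
      using sum_abs_integral_badic_box_times_Haar_le[OF b ki, of j] unfolding c_def X_def .
  qed
  also have "\<dots> = a * X * real (card {j \<in> levels s L. \<forall>l<s. m l \<le> j l})"
    by (simp add: sum.inter_filter[symmetric, OF finite_levels])
  finally show ?thesis by (simp add: X_def mult.assoc)
qed

lemma wterm_scaled_fooling_fun_vanish:
  assumes "b \<ge> 2" "a \<ge> 0" "1 \<le> p" "L < (\<Sum>l<s. m l)"
  shows "wterm b \<alpha> s p (\<lambda>y. a * fooling_fun b s N x L y) m = 0"
proof -
  have "wterm b \<alpha> s p (\<lambda>y. a * fooling_fun b s N x L y) m \<le> real b powr ((\<alpha> + 1/2) * real (\<Sum>l<s. m l)) * 0"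
    using assms abs_wcoef_scaled_fooling_fun_le[of b a _ _ s m N x L] dominating_levels_empty[OF assms(4)]
    by (intro wterm_le_coefficient_bound) auto
  then show ?thesis
    using wterm_nonneg[of b \<alpha> s p "\<lambda>y. a * fooling_fun b s N x L y" m] assms(1) by simp
qed

lemma wterm_scaled_fooling_fun_le:
  assumes b: "b \<ge> 2" and a: "a \<ge> 0" and p: "1 \<le> p" and s: "s \<ge> 1" and mL: "(\<Sum>l<s. m l) \<le> L"
  shows "wterm b \<alpha> s p (\<lambda>y. a * fooling_fun b s N x L y) m \<le> a * 2 ^ s * real b powr (\<alpha> * real L) *
           ((real (L - (\<Sum>l<s. m l)) + 1) powr real (s - 1) * real b powr (- \<alpha> * real (L - (\<Sum>l<s. m l))))"
proof -
  define Lm where "Lm = (\<Sum>l<s. m l)"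
  define C where "C = real (card {j \<in> levels s L. \<forall>l<s. m l \<le> j l})"
  have "wterm b \<alpha> s p (\<lambda>y. a * fooling_fun b s N x L y) m
      \<le> real b powr ((\<alpha> + 1/2) * real Lm) * (a * 2 ^ s * real b powr (- real Lm / 2) * C)"
    unfolding Lm_def C_def using b a p
    by (intro wterm_le_coefficient_bound abs_wcoef_scaled_fooling_fun_le) auto
  also have "\<dots> = a * 2 ^ s * C * real b powr (\<alpha> * real Lm)"
    by (simp add: powr_add[symmetric] algebra_simps)
  also have "\<dots> \<le> a * 2 ^ s * (real (L - Lm) + 1) powr real (s - 1) * real b powr (\<alpha> * real Lm)"
  proof (intro mult_right_mono mult_left_mono)
    have "C \<le> real ((L - Lm + 1) ^ (s - 1))"
      using card_dominating_levels_le[OF s mL] unfolding C_def Lm_def of_nat_le_iff .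
    then show "C \<le> (real (L - Lm) + 1) powr real (s - 1)"
      by (simp add: powr_realpow add.commute)
  qed (use a in auto)
  also have "real b powr (\<alpha> * real Lm) = real b powr (\<alpha> * real L) * real b powr (- \<alpha> * real (L - Lm))"
    using mL by (simp add: Lm_def powr_add[symmetric] of_nat_diff algebra_simps)
  finally show ?thesis
    by (simp only: Lm_def mult_ac)
qed

section \<open>The lower bound\<close>

lemma wav_norm_scaled_fooling_fun_le:
  fixes K :: real
  assumes b: "b \<ge> 2" and s: "s \<ge> 1" and p: "1 \<le> p" and q: "1 \<le> q" and a: "a \<ge> 0"
    and K: "\<And>n. (\<Sum>d\<le>n. ((real d + 1) powr real (s - 1) * real b powr (- \<alpha> * real d))
                      powr sum_exponent q) \<le> K"
  shows "wav_norm b \<alpha> s p q (\<lambda>y. a * fooling_fun b s N x L y)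
           \<le> ereal (a * 2 ^ s * real b powr (\<alpha> * real L) * K powr (1 / sum_exponent q)
                    * real (card (levels s L)) powr einv q)"
  using b s p q a K
  by (intro wav_norm_le_profile[where h = "\<lambda>d. (real d + 1) powr real (s - 1) * real b powr (- \<alpha> * real d)"]
      wterm_scaled_fooling_fun_vanish wterm_scaled_fooling_fun_le) auto

lemma e_wor_ge_integral:
  assumes "f \<in> Htilde b s" "wav_norm b \<alpha> s p q f \<le> 1" "\<And>i. i < N \<Longrightarrow> f (x i) = 0"
  shows "ereal (integral\<^sup>L (cube s) f) \<le> e_wor b \<alpha> s p q N w x"
proof -
  have "ereal (integral\<^sup>L (cube s) f) \<le> ereal \<bar>integral\<^sup>L (cube s) f - (\<Sum>i<N. w i * f (x i))\<bar>"
    using assms(3) by simp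
  also have "\<dots> \<le> e_wor b \<alpha> s p q N w x"
    unfolding e_wor_def using assms(1,2) by (intro SUP_upper) auto
  finally show ?thesis .
qed

lemma summable_powr_times_exp_decay:
  fixes r \<beta> \<gamma> :: real
  assumes "\<beta> > 1" "\<gamma> > 0"
  shows "summable (\<lambda>d. (real d + 1) powr r * \<beta> powr (- \<gamma> * real d))"
proof (rule summable_comparison_test_bigo)
  show "summable (\<lambda>n. norm (real n powr (-2)))"
    by (simp add: summable_real_powr_iff)
  have "ln \<beta> > 0" using assms by simp
  then show "(\<lambda>d. (real d + 1) powr r * \<beta> powr (- \<gamma> * real d)) \<in> O(\<lambda>n. real n powr (-2))"
    using assms by real_asymp
qed

lemma exists_bound_sum_powr_exp_decay:
  fixes r \<beta> \<gamma> R :: real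
  assumes \<beta>: "\<beta> > 1" and \<gamma>: "\<gamma> > 0" and R: "R > 0"
  shows "\<exists>K>0. \<forall>n. (\<Sum>d\<le>n. ((real d + 1) powr r * \<beta> powr (- \<gamma> * real d)) powr R) \<le> K"
proof -
  define h where "h d = ((real d + 1) powr r * \<beta> powr (- \<gamma> * real d)) powr R" for d :: nat
  have "summable (\<lambda>d. (real d + 1) powr (r * R) * \<beta> powr (- (R * \<gamma>) * real d))"
    using \<beta> \<gamma> R by (intro summable_powr_times_exp_decay) auto
  moreover have "h = (\<lambda>d. (real d + 1) powr (r * R) * \<beta> powr (- (R * \<gamma>) * real d))"
    using \<beta> by (simp add: h_def fun_eq_iff powr_mult powr_powr mult_ac)
  ultimately have "(\<Sum>d\<le>n. h d) \<le> suminf h" for n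
    by (intro sum_le_suminf) (auto simp: h_def)
  moreover from this[of 0] have "suminf h > 0"
    using \<beta> by (simp add: h_def)
  ultimately show ?thesis
    unfolding h_def by blast
qed

lemma e_wor_ge_card_levels:
  assumes b: "b \<ge> 2" and s: "s \<ge> 1" and \<alpha>: "\<alpha> > 0" and q: "1 \<le> q"
  shows "\<exists>C>0. \<forall>p N w x L. 1 \<le> p \<longrightarrow> 2 * N \<le> b ^ L \<longrightarrow>
           ereal (real (card (levels s L)) powr (1 - einv q) / (C * real b powr (\<alpha> * real L)))
             \<le> e_wor b \<alpha> s p q N w x"
proof -
  define R where "R = sum_exponent q"
  obtain K where K_pos: "K > 0" and K: "\<And>n. (\<Sum>d\<le>n. ((real d + 1) powr real (s - 1)
      * real b powr (- \<alpha> * real d)) powr sum_exponent q) \<le> K"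
    using exists_bound_sum_powr_exp_decay[of "real b" \<alpha> "sum_exponent q" "real (s - 1)"]
      b \<alpha> sum_exponent_ge_1[OF q] by auto
  define C where "C = 2 ^ (s + 1) * K powr (1 / R)"
  have "ereal (real (card (levels s L)) powr (1 - einv q) / (C * real b powr (\<alpha> * real L)))
          \<le> e_wor b \<alpha> s p q N w x" if p: "1 \<le> p" and L: "2 * N \<le> b ^ L" for p N w x L
  proof -
    define nJ where "nJ = real (card (levels s L))"
    have nJ: "nJ > 0" using card_levels_pos[OF s] by (simp add: nJ_def)
    define a where "a = 1 / (2 ^ s * real b powr (\<alpha> * real L) * K powr (1 / R) * nJ powr einv q)"
    have a: "a > 0" using K_pos nJ b by (simp add: a_def)
    have "wav_norm b \<alpha> s p q (\<lambda>y. a * fooling_fun b s N x L y) \<le> 1"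
      using wav_norm_scaled_fooling_fun_le[OF b s p q less_imp_le[OF a] K, where N=N and x=x and L=L]
        nJ K_pos b by (simp add: a_def nJ_def R_def one_ereal_def)
    then have upper: "ereal (integral\<^sup>L (cube s) (\<lambda>y. a * fooling_fun b s N x L y)) \<le> e_wor b \<alpha> s p q N w x"
      using b by (intro e_wor_ge_integral scaled_fooling_fun_in_Htilde) (auto simp: fooling_fun_at_points)
    have "nJ powr (1 - einv q) / (C * real b powr (\<alpha> * real L)) = a * (nJ / 2)"
      using nJ by (simp add: a_def C_def powr_diff field_simps)
    also have "\<dots> \<le> integral\<^sup>L (cube s) (\<lambda>y. a * fooling_fun b s N x L y)"
      using a integral_fooling_fun_ge[OF _ L, of s x] b by (simp add: nJ_def)
    finally show ?thesis
      using upper unfolding nJ_def by (meson ereal_less_eq(3) order.trans)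
  qed
  moreover have "C > 0" using K_pos by (simp add: C_def)
  ultimately show ?thesis by blast
qed

lemma exists_power_between:
  fixes b n :: nat
  assumes b: "b \<ge> 2" and n: "n \<ge> 1"
  shows "\<exists>L. n \<le> b ^ L \<and> b ^ L \<le> b * n"
proof -
  define L where "L = (LEAST L. n \<le> b ^ L)"
  have "n < 2 ^ n" by (rule less_exp)
  also have "(2::nat) ^ n \<le> b ^ n" using b by (intro power_mono) auto
  finally have "n \<le> b ^ n" by simp
  then have nL: "n \<le> b ^ L"
    unfolding L_def by (rule LeastI)
  show ?thesis
  proof (cases "L = 0")
    case True
    then show ?thesis using nL b n by (intro exI[of _ L]) simp
  next
    case False
    have "\<not> n \<le> b ^ (L - 1)"
      unfolding L_def by (rule not_less_Least) (use False in \<open>simp add: L_def[symmetric]\<close>)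
    then have "b * b ^ (L - 1) \<le> b * n" by simp
    also have "b * b ^ (L - 1) = b ^ L"
      using False by (simp add: power_Suc[symmetric])
    finally show ?thesis using nL by blast
  qed
qed

lemma min_powr_le_powr_between:
  fixes y a t c :: real
  assumes "0 < y" "a \<le> t" "t \<le> c"
  shows "min (y powr a) (y powr c) \<le> y powr t"
proof (cases "1 \<le> y")
  case True
  then have "y powr a \<le> y powr t" using assms by (intro powr_mono) auto
  then show ?thesis by simp
next
  case False
  then have "y powr c \<le> y powr t" using assms by (intro powr_mono') auto
  then show ?thesis by simp
qed

lemma ln_powr_le_card_levels_powr:
  assumes b: "b \<ge> 2" and s: "s \<ge> 1" and N: "N > 1" and NL: "real N \<le> real b ^ L"
    and e: "0 \<le> e" "e \<le> 1"
  shows "min ((real s * ln (real b)) powr - real (s - 1)) 1 * ln (real N) powr (real (s - 1) * (1 - e))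
           \<le> real (card (levels s L)) powr (1 - e)"
proof -
  define y where "y = real s * ln (real b)"
  define t where "t = real (s - 1) * (1 - e)"
  define X where "X = ln (real N) / y"
  have y: "y > 0" and lnN: "ln (real N) > 0" using b s N by (simp_all add: y_def)
  then have X: "X > 0" by (simp add: X_def)
  have "ln (real N) \<le> ln (real b ^ L)"
    using NL N b by (subst ln_le_cancel_iff) auto
  then have "ln (real N) \<le> real L * ln (real b)"
    using b by (simp add: ln_realpow)
  then have "X \<le> real L * ln (real b) / y"
    using y by (simp add: X_def divide_right_mono)
  also have "\<dots> = real L / real s"
    using b s by (simp add: y_def)
  finally have "X \<le> real L / real s" .
  then have "X ^ (s - 1) \<le> (real L / real s) ^ (s - 1)"
    using y lnN by (intro power_mono) (simp_all add: X_def)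
  also have "\<dots> \<le> real (card (levels s L))"
    using card_levels_ge[OF s] .
  finally have "(X ^ (s - 1)) powr (1 - e) \<le> real (card (levels s L)) powr (1 - e)"
    using e X by (intro powr_mono2) auto
  also have "(X ^ (s - 1)) powr (1 - e) = X powr t"
    using X by (simp add: t_def powr_realpow[symmetric] powr_powr)
  also have "\<dots> = y powr - t * ln (real N) powr t"
    using lnN y by (simp add: X_def powr_divide powr_minus_divide)
  finally have "y powr - t * ln (real N) powr t \<le> real (card (levels s L)) powr (1 - e)" .
  moreover have "min (y powr - real (s - 1)) (y powr 0) \<le> y powr - t"
    using y e by (intro min_powr_le_powr_between) (auto simp: t_def mult_left_le)
  then have "min (y powr - real (s - 1)) 1 * ln (real N) powr t \<le> y powr - t * ln (real N) powr t"
    using y by (intro mult_right_mono) auto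
  ultimately show ?thesis
    unfolding y_def t_def by linarith
qed

lemma lower_bound_at_level:
  fixes C \<alpha> e :: real
  assumes b: "b \<ge> 2" and s: "s \<ge> 1" and N: "N > 1" and L: "2 * N \<le> b ^ L" "b ^ L \<le> b * (2 * N)"
    and \<alpha>: "\<alpha> \<ge> 0" and e: "0 \<le> e" "e \<le> 1" and C: "C > 0"
  shows "min ((real s * ln (real b)) powr - real (s - 1)) 1 / (C * (2 * real b) powr \<alpha>)
           * real N powr (- \<alpha>) * ln (real N) powr (real (s - 1) * (1 - e))
         \<le> real (card (levels s L)) powr (1 - e) / (C * real b powr (\<alpha> * real L))"
proof -
  define \<mu> where "\<mu> = min ((real s * ln (real b)) powr - real (s - 1)) 1"
  have "real b powr (\<alpha> * real L) = (real b ^ L) powr \<alpha>"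
    using b by (simp add: powr_realpow[symmetric] powr_powr mult.commute)
  also have "\<dots> \<le> (2 * real b * real N) powr \<alpha>"
  proof (rule powr_mono2)
    have "real (b ^ L) \<le> real (b * (2 * N))"
      using L(2) by (simp only: of_nat_le_iff)
    then show "real b ^ L \<le> 2 * real b * real N" by simp
  qed (use \<alpha> in auto)
  also have "\<dots> = (2 * real b) powr \<alpha> * real N powr \<alpha>"
    by (simp add: powr_mult)
  finally have bL: "real b powr (\<alpha> * real L) \<le> (2 * real b) powr \<alpha> * real N powr \<alpha>" .
  have NL: "real N \<le> real b ^ L"
    using L(1) by (metis le_trans le_add2 mult_2 of_nat_le_iff of_nat_power)
  have "\<mu> / (C * (2 * real b) powr \<alpha>) * real N powr (- \<alpha>) * ln (real N) powr (real (s - 1) * (1 - e))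
      = \<mu> * ln (real N) powr (real (s - 1) * (1 - e)) / (C * ((2 * real b) powr \<alpha> * real N powr \<alpha>))"
    using N by (simp add: powr_minus field_simps)
  also have "\<dots> \<le> real (card (levels s L)) powr (1 - e) / (C * ((2 * real b) powr \<alpha> * real N powr \<alpha>))"
    using ln_powr_le_card_levels_powr[OF b s N NL e] C b N unfolding \<mu>_def
    by (intro divide_right_mono) auto
  also have "\<dots> \<le> real (card (levels s L)) powr (1 - e) / (C * real b powr (\<alpha> * real L))"
    using bL C b N by (intro divide_left_mono mult_left_mono mult_pos_pos) auto
  finally show ?thesis unfolding \<mu>_def .
qed

theorem theorem3:
  fixes b s :: nat and \<alpha> :: real and q :: ereal
  assumes "b \<ge> 2" and "s \<ge> 1" and "\<alpha> > 0" and "1 \<le> q"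
  shows "\<exists>c>0. \<forall>(p::ereal) (N::nat) (w :: nat \<Rightarrow> real) (x :: nat \<Rightarrow> nat \<Rightarrow> real).
           1 \<le> p \<longrightarrow> N \<ge> 3 \<longrightarrow> (\<forall>i<N. \<forall>l<s. 0 \<le> x i l \<and> x i l < 1) \<longrightarrow>
           ereal (c * real N powr (- \<alpha>) * ln (real N) powr (real (s - 1) * (1 - einv q)))
             \<le> e_wor b \<alpha> s p q N w x"
proof -
  obtain C where C: "C > 0" and fool: "\<And>p N w x L. 1 \<le> p \<Longrightarrow> 2 * N \<le> b ^ L \<Longrightarrow>
      ereal (real (card (levels s L)) powr (1 - einv q) / (C * real b powr (\<alpha> * real L)))
        \<le> e_wor b \<alpha> s p q N w x"
    using e_wor_ge_card_levels[OF assms] by blast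
  define c where "c = min ((real s * ln (real b)) powr - real (s - 1)) 1 / (C * (2 * real b) powr \<alpha>)"
  \<comment> \<open>The nodes need not lie in \<open>[0,1)\<^sup>s\<close>: the fooling function vanishes at them anyway.\<close>
  have "ereal (c * real N powr (- \<alpha>) * ln (real N) powr (real (s - 1) * (1 - einv q)))
          \<le> e_wor b \<alpha> s p q N w x" if "1 \<le> p" "N \<ge> 3" for p N w x
  proof -
    obtain L where L: "2 * N \<le> b ^ L" "b ^ L \<le> b * (2 * N)"
      using exists_power_between[OF assms(1), of "2 * N"] \<open>N \<ge> 3\<close> by auto
    have "c * real N powr (- \<alpha>) * ln (real N) powr (real (s - 1) * (1 - einv q))
        \<le> real (card (levels s L)) powr (1 - einv q) / (C * real b powr (\<alpha> * real L))"
      unfolding c_def using assms \<open>N \<ge> 3\<close> einv_bounds[OF assms(4)] C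
      by (intro lower_bound_at_level L) auto
    then show ?thesis
      using fool[OF \<open>1 \<le> p\<close> L(1)] by (meson ereal_less_eq(3) order.trans)
  qed
  moreover have "c > 0" using C assms by (simp add: c_def)
  ultimately show ?thesis by blast
qed

end
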